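(* Let $\langle X,d\rangle$ be a metric space with completion $\langle\widehat{X},\widehat{d}\rangle$. The following are equivalent: (1) $\widehat{X}$ is cofinally Bourbaki quasi-complete; (2) $\widehat{X}$ is cofinally Bourbaki complete and every CBC-regular function from $X$ to any metric space $\langle Y,\rho\rangle$ maps cofinally Bourbaki quasi-Cauchy sequences to cofinally Bourbaki-Cauchy sequences; (3) $\widehat{X}$ is cofinally Bourbaki complete and every real-valued CBC-regular function on $X$ maps cofinally Bourbaki quasi-Cauchy sequences to cofinally Bourbaki-Cauchy sequences; (4) $\widehat{X}$ is cofinally Bourbaki complete and every cofinally Bourbaki quasi-Cauchy sequence in $X$ is cofinally Bourbaki-Cauchy.
   Context: For $\varepsilon>0$, an $\varepsilon$-chain joining $x,y$ is a finite sequence $x=x_0,\dots,x_n=y$ with consecutive distances $<\varepsilon$. A sequence $\langle x_n\rangle$ in a metric space is cofinally Bourbaki quasi-Cauchy if for every $\varepsilon>0$ there is an infinite $N_\varepsilon\subseteq\mathbb{N}$ such that any $x_j,x_k$ with $j,k\in N_\varepsilon$ can be joined by an $\varepsilon$-chain in that space; a space is cofinally Bourbaki quasi-complete if every such sequence has a cluster point. In a metric space $\langle Y,\rho\rangle$ let $S^1_\rho(p,\varepsilon)$ be the open $\varepsilon$-ball about $p$ and $S^{m}_\rho(p,\varepsilon)=\{y:\rho(y,S^{m-1}_\rho(p,\varepsilon))<\varepsilon\}$; a sequence $\langle y_n\rangle$ is cofinally Bourbaki-Cauchy if for every $\varepsilon>0$ there exist an infinite $N_\varepsilon\subseteq\mathbb{N}$,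 $m\in\mathbb{N}$, $p\in Y$ with $y_n\in S^m_\rho(p,\varepsilon)$ for all $n\in N_\varepsilon$. A space is cofinally Bourbaki complete if every cofinally Bourbaki-Cauchy sequence has a cluster point. A function is CBC-regular if it maps cofinally Bourbaki-Cauchy sequences to cofinally Bourbaki-Cauchy sequences. *)

theory Defs
  imports "HOL-Analysis.Analysis"
begin

definition eps_chain :: "'a metric \<Rightarrow> real \<Rightarrow> 'a \<Rightarrow> 'a \<Rightarrow> bool" where
  "eps_chain m e x y \<longleftrightarrow>
     (\<exists>(c :: nat \<Rightarrow> 'a) n. c 0 = x \<and> c n = y \<and> (\<forall>i\<le>n. c i \<in> mspace m) \<and>
        (\<forall>i<n. mdist m (c i) (c (Suc i)) < e))"

definition cbqc_seq :: "'a metric \<Rightarrow> (nat \<Rightarrow> 'a) \<Rightarrow> bool" where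
  "cbqc_seq m s \<longleftrightarrow> range s \<subseteq> mspace m \<and>
     (\<forall>e>0. \<exists>N::nat set. infinite N \<and> (\<forall>j\<in>N. \<forall>k\<in>N. eps_chain m e (s j) (s k)))"

definition has_cluster_point :: "'a metric \<Rightarrow> (nat \<Rightarrow> 'a) \<Rightarrow> bool" where
  "has_cluster_point m s \<longleftrightarrow>
     (\<exists>x\<in>mspace m. \<forall>e>0. infinite {n. s n \<in> mball_of m x e})"

definition cb_quasi_complete :: "'a metric \<Rightarrow> bool" where
  "cb_quasi_complete m \<longleftrightarrow> (\<forall>s. cbqc_seq m s \<longrightarrow> has_cluster_point m s)"

text \<open>Iterated enlargements: bourbaki_S m p e k is S^k(p,e) for k \<ge> 1
  (S^1 is the open ball; S^(k+1) = points at distance < e from S^k, where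
  dist(y,A) < e is unfolded as: some a in A has d(y,a) < e).\<close>
fun bourbaki_S :: "'a metric \<Rightarrow> 'a \<Rightarrow> real \<Rightarrow> nat \<Rightarrow> 'a set" where
  "bourbaki_S m p e 0 = {p}"
| "bourbaki_S m p e (Suc k) = {y \<in> mspace m. \<exists>a\<in>bourbaki_S m p e k. mdist m y a < e}"

definition cbc_seq :: "'a metric \<Rightarrow> (nat \<Rightarrow> 'a) \<Rightarrow> bool" where
  "cbc_seq m s \<longleftrightarrow> range s \<subseteq> mspace m \<and>
     (\<forall>e>0. \<exists>(N::nat set) (k::nat) p. infinite N \<and> k \<ge> 1 \<and> p \<in> mspace m \<and>
        (\<forall>n\<in>N. s n \<in> bourbaki_S m p e k))"

definition cb_complete :: "'a metric \<Rightarrow> bool" where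
  "cb_complete m \<longleftrightarrow> (\<forall>s. cbc_seq m s \<longrightarrow> has_cluster_point m s)"

definition cbc_regular :: "'a metric \<Rightarrow> 'b metric \<Rightarrow> ('a \<Rightarrow> 'b) \<Rightarrow> bool" where
  "cbc_regular mX mY f \<longleftrightarrow> (\<forall>s. cbc_seq mX s \<longrightarrow> cbc_seq mY (f \<circ> s))"

text \<open>Condition (2) for target metric spaces whose points lie in type 'b.\<close>
definition cond2 :: "'a metric \<Rightarrow> 'b itself \<Rightarrow> bool" where
  "cond2 mX _ \<longleftrightarrow> (\<forall>(mY :: 'b metric) f. f \<in> mspace mX \<rightarrow> mspace mY \<longrightarrow> cbc_regular mX mY f \<longrightarrow>
       (\<forall>s. cbqc_seq mX s \<longrightarrow> cbc_seq mY (f \<circ> s)))"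

end

theory Submission
  imports Defs
begin

text \<open>
  If the completion is cofinally Bourbaki quasi-complete, a cofinally Bourbaki quasi-Cauchy
  sequence in X has a cluster point z there, and its terms in the (e/2)-ball about z all lie in
  the e-ball about one of them; so it is cofinally Bourbaki-Cauchy in X, and CBC-regular maps
  then preserve it by definition.

  Conversely, let s be a cofinally Bourbaki quasi-Cauchy sequence in the completion without
  cluster point. Density gives x in X with d(s n, x n) tending to 0; e-chains between the s n
  can be pushed into X, so x is cofinally Bourbaki quasi-Cauchy in X, and x has no cluster
  point either.
  The real function sending x n to the index of the first occurrence of x n is CBC-regular: a
  cofinally Bourbaki-Cauchy sequence in X has a cluster point in the cofinally Bourbaki complete
  completion, and a small ball about it contains only finitely many x n, so the function is
  bounded on infinitely many terms. Yet along x itself it tends to infinity, since each value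
  of x is taken only finitely often; so it is not cofinally Bourbaki-Cauchy on x.
\<close>

lemma mdist_self [simp]: "x \<in> mspace m \<Longrightarrow> mdist m x x = 0"
  by simp

definition eps_step :: "'a metric \<Rightarrow> real \<Rightarrow> 'a rel" where
  "eps_step m e = {(x, y). x \<in> mspace m \<and> y \<in> mspace m \<and> mdist m x y < e}"

lemma eps_chain_iff_rtrancl:
  "eps_chain m e x y \<longleftrightarrow> x \<in> mspace m \<and> (x, y) \<in> (eps_step m e)\<^sup>*"
proof -
  have "(\<forall>i\<le>n. c i \<in> mspace m) \<and> (\<forall>i<n. mdist m (c i) (c (Suc i)) < e) \<longleftrightarrow>
        c 0 \<in> mspace m \<and> (\<forall>i<n. (c i, c (Suc i)) \<in> eps_step m e)" (is "?L \<longleftrightarrow> ?R")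
    for c :: "nat \<Rightarrow> 'a" and n
  proof
    show "?L \<Longrightarrow> ?R" by (auto simp: eps_step_def)
  next
    assume R: ?R
    then have "c i \<in> mspace m" if "i \<le> n" for i
      using that by (cases i) (auto simp: eps_step_def)
    with R show ?L by (auto simp: eps_step_def)
  qed
  then show ?thesis
    unfolding eps_chain_def rtrancl_power relpow_fun_conv by auto
qed

lemma rtrancl_eps_step_mspace:
  "(x, y) \<in> (eps_step m e)\<^sup>* \<Longrightarrow> x \<in> mspace m \<Longrightarrow> y \<in> mspace m"
  by (induction rule: rtrancl_induct) (auto simp: eps_step_def)

lemma eps_chain_sym: "eps_chain m e x y \<Longrightarrow> eps_chain m e y x"
proof -
  have "sym (eps_step m e)"
    by (auto simp: sym_def eps_step_def mdist_commute)
  then show "eps_chain m e x y \<Longrightarrow> eps_chain m e y x"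
    unfolding eps_chain_iff_rtrancl by (meson rtrancl_eps_step_mspace sym_rtrancl symD)
qed

lemma eps_chain_trans: "eps_chain m e x y \<Longrightarrow> eps_chain m e y z \<Longrightarrow> eps_chain m e x z"
  unfolding eps_chain_iff_rtrancl by (meson rtrancl_trans)

lemma eps_chain_snoc:
  assumes "eps_chain m e x y" "z \<in> mspace m" "mdist m y z < e"
  shows "eps_chain m e x z"
proof -
  have "(y, z) \<in> eps_step m e"
    using assms rtrancl_eps_step_mspace by (auto simp: eps_chain_iff_rtrancl eps_step_def)
  with assms(1) show ?thesis
    unfolding eps_chain_iff_rtrancl by (meson rtrancl_into_rtrancl)
qed

lemma eps_chain_submetric: "eps_chain (submetric m X) e x y \<Longrightarrow> eps_chain m e x y"
proof -
  have "eps_step (submetric m X) e \<subseteq> eps_step m e"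
    by (auto simp: eps_step_def)
  then show "eps_chain (submetric m X) e x y \<Longrightarrow> eps_chain m e x y"
    unfolding eps_chain_iff_rtrancl using rtrancl_mono by auto
qed

lemma bourbaki_S_eps_chain:
  "p \<in> mspace m \<Longrightarrow> y \<in> bourbaki_S m p e k \<Longrightarrow> eps_chain m e p y"
proof (induction k arbitrary: y)
  case 0
  then show ?case by (simp add: eps_chain_iff_rtrancl)
next
  case (Suc k)
  then obtain a where "a \<in> bourbaki_S m p e k" "y \<in> mspace m" "mdist m a y < e"
    by (auto simp: mdist_commute)
  with Suc show ?case by (meson eps_chain_snoc)
qed

lemma bourbaki_S_submetric_subset: "bourbaki_S (submetric m X) p e k \<subseteq> bourbaki_S m p e k"
  by (induction k) auto

lemma bourbaki_S_mdist_le: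
  "p \<in> mspace m \<Longrightarrow> y \<in> bourbaki_S m p e k \<Longrightarrow> mdist m p y \<le> real k * e"
proof (induction k arbitrary: y)
  case 0
  then show ?case by simp
next
  case (Suc k)
  then obtain a where a: "a \<in> bourbaki_S m p e k" "y \<in> mspace m" "mdist m a y < e"
    by (auto simp: mdist_commute)
  moreover have "a \<in> mspace m"
    using a(1) Suc.prems(1) by (cases k) auto
  ultimately have "mdist m p y \<le> mdist m p a + mdist m a y"
    using Suc.prems(1) by (intro mdist_triangle)
  with Suc.IH[OF Suc.prems(1) a(1)] a(3) show ?case
    by (simp add: algebra_simps)
qed

lemma in_bourbaki_S_if_dist_less:
  fixes p y :: "'a::real_normed_vector"
  shows "dist p y < real (Suc k) * e \<Longrightarrow> y \<in> bourbaki_S euclidean_metric p e (Suc k)"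
proof (induction k arbitrary: y)
  case 0
  then show ?case by (simp add: dist_commute)
next
  case (Suc k)
  define t where "t = real (Suc k) / real (Suc (Suc k))"
  define a where "a = p + t *\<^sub>R (y - p)"
  have "dist p a = t * dist p y"
    by (simp add: a_def t_def dist_norm norm_minus_commute)
  also have "\<dots> < t * (real (Suc (Suc k)) * e)"
    using Suc.prems by (intro mult_strict_left_mono) (auto simp: t_def)
  also have "\<dots> = real (Suc k) * e"
    by (simp add: t_def)
  finally have "a \<in> bourbaki_S euclidean_metric p e (Suc k)"
    by (rule Suc.IH)
  moreover have "dist y a = dist p y / real (Suc (Suc k))"
  proof -
    have "y - a = (1 - t) *\<^sub>R (y - p)"
      by (simp add: a_def algebra_simps)
    moreover have "1 - t = 1 / real (Suc (Suc k))"
      by (simp add: t_def field_simps)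
    ultimately show ?thesis
      by (simp add: dist_norm norm_minus_commute)
  qed
  moreover have "dist p y / real (Suc (Suc k)) < e"
    using Suc.prems by (simp add: divide_less_eq mult.commute)
  ultimately show ?case by auto
qed

lemma cbqc_seq_if_cbc_seq:
  assumes "cbc_seq m s"
  shows "cbqc_seq m s"
  unfolding cbqc_seq_def
proof (intro conjI allI impI)
  show "range s \<subseteq> mspace m"
    using assms by (simp add: cbc_seq_def)
  fix e :: real
  assume "e > 0"
  then obtain N k p where "infinite N" "p \<in> mspace m" "\<forall>n\<in>N. s n \<in> bourbaki_S m p e k"
    using assms unfolding cbc_seq_def by blast
  then show "\<exists>N. infinite N \<and> (\<forall>j\<in>N. \<forall>k\<in>N. eps_chain m e (s j) (s k))"
    by (meson bourbaki_S_eps_chain eps_chain_sym eps_chain_trans)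
qed

lemma cbqc_seq_submetric: "cbqc_seq (submetric m X) s \<Longrightarrow> cbqc_seq m s"
  unfolding cbqc_seq_def by (metis eps_chain_submetric le_infE mspace_submetric)

lemma cbc_seq_submetric: "cbc_seq (submetric m X) s \<Longrightarrow> cbc_seq m s"
  unfolding cbc_seq_def by (metis IntE bourbaki_S_submetric_subset le_infE mspace_submetric subsetD)

lemma cbc_seq_euclidean_iff:
  fixes s :: "nat \<Rightarrow> 'a::real_normed_vector"
  shows "cbc_seq euclidean_metric s \<longleftrightarrow> (\<exists>N. infinite N \<and> bounded (s ` N))"
proof
  assume "cbc_seq euclidean_metric s"
  then obtain N k p where "infinite N" "\<forall>n\<in>N. s n \<in> bourbaki_S euclidean_metric p 1 k"
    unfolding cbc_seq_def by (meson zero_less_one)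
  then have "\<forall>n\<in>N. dist p (s n) \<le> real k"
    using bourbaki_S_mdist_le[of p euclidean_metric _ 1] by auto
  with \<open>infinite N\<close> show "\<exists>N. infinite N \<and> bounded (s ` N)"
    unfolding bounded_def by blast
next
  assume "\<exists>N. infinite N \<and> bounded (s ` N)"
  then obtain N p B where N: "infinite N" "\<forall>n\<in>N. dist p (s n) \<le> B"
    unfolding bounded_def by blast
  show "cbc_seq euclidean_metric s"
    unfolding cbc_seq_def
  proof (intro conjI allI impI)
    fix e :: real
    assume "e > 0"
    then obtain k where "B < real k * e"
      using reals_Archimedean3 by blast
    then have "\<forall>n\<in>N. s n \<in> bourbaki_S euclidean_metric p e (Suc k)"
      using N(2) \<open>e > 0\<close> by (intro ballI in_bourbaki_S_if_dist_less) (force simp: algebra_simps)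
    with N(1) show "\<exists>N k p. infinite N \<and> 1 \<le> k \<and> p \<in> mspace euclidean_metric \<and>
        (\<forall>n\<in>N. s n \<in> bourbaki_S euclidean_metric p e k)"
      by (intro exI[of _ N] exI[of _ "Suc k"] exI[of _ p]) simp
  qed simp
qed

lemma cb_complete_if_cb_quasi_complete: "cb_quasi_complete m \<Longrightarrow> cb_complete m"
  by (simp add: cb_quasi_complete_def cb_complete_def cbqc_seq_if_cbc_seq)

lemma cbc_seq_submetric_if_has_cluster_point:
  assumes "has_cluster_point m s" "range s \<subseteq> mspace (submetric m X)"
  shows "cbc_seq (submetric m X) s"
  unfolding cbc_seq_def
proof (intro conjI allI impI)
  show "range s \<subseteq> mspace (submetric m X)" by fact
  fix e :: real
  assume "e > 0"
  obtain z where z: "z \<in> mspace m" "infinite {n. s n \<in> mball_of m z (e/2)}"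
    using assms(1) \<open>e > 0\<close> unfolding has_cluster_point_def by (meson half_gt_zero)
  define N where "N = {n. s n \<in> mball_of m z (e/2)}"
  obtain n0 where "n0 \<in> N"
    using z(2) N_def infinite_imp_nonempty by blast
  have "s n \<in> bourbaki_S (submetric m X) (s n0) e 1" if "n \<in> N" for n
  proof -
    have "mdist m (s n) (s n0) \<le> mdist m (s n) z + mdist m z (s n0)"
      using \<open>n \<in> N\<close> \<open>n0 \<in> N\<close> by (intro mdist_triangle) (auto simp: N_def)
    also have "\<dots> < e"
      using \<open>n \<in> N\<close> \<open>n0 \<in> N\<close> by (simp add: N_def mdist_commute)
    finally show ?thesis
      using assms(2) by auto
  qed
  moreover have "s n0 \<in> mspace (submetric m X)"
    using assms(2) by auto
  ultimately show "\<exists>N k p. infinite N \<and> 1 \<le> k \<and> p \<in> mspace (submetric m X) \<and>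
      (\<forall>n\<in>N. s n \<in> bourbaki_S (submetric m X) p e k)"
    using z(2) unfolding N_def by blast
qed

lemma cbc_seq_if_cbqc_seq_submetric:
  assumes "cb_quasi_complete m" "cbqc_seq (submetric m X) s"
  shows "cbc_seq (submetric m X) s"
proof -
  have "has_cluster_point m s"
    using assms cbqc_seq_submetric unfolding cb_quasi_complete_def by blast
  moreover have "range s \<subseteq> mspace (submetric m X)"
    using assms(2) by (simp add: cbqc_seq_def)
  ultimately show ?thesis
    by (rule cbc_seq_submetric_if_has_cluster_point)
qed

lemma cond2_if_cbqc_imp_cbc: "(\<forall>s. cbqc_seq mX s \<longrightarrow> cbc_seq mX s) \<Longrightarrow> cond2 mX TYPE('b)"
  by (simp add: cond2_def cbc_regular_def)

lemma finite_ge_if_LIMSEQ_zero: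
  fixes f :: "nat \<Rightarrow> real"
  assumes "f \<longlonglongrightarrow> 0" "r > 0"
  shows "finite {n. r \<le> f n}"
proof -
  have "eventually (\<lambda>n. f n < r) cofinite"
    using order_tendstoD(2)[OF assms] by (simp add: cofinite_eq_sequentially)
  then show ?thesis
    by (simp add: eventually_cofinite not_less)
qed

lemma dense_meets_mball_of:
  assumes "mtopology_of m closure_of X = mspace m" "z \<in> mspace m" "r > 0"
  shows "\<exists>y\<in>X. y \<in> mball_of m z r"
  using assms
  by (auto simp: mtopology_of_def mball_of_def Metric_space.metric_closure_of[OF Metric_space_mspace_mdist])

lemma dense_approximating_seq:
  assumes "mtopology_of m closure_of X = mspace m" "range s \<subseteq> mspace m"
  obtains x where "range x \<subseteq> mspace (submetric m X)" "(\<lambda>n. mdist m (s n) (x n)) \<longlonglongrightarrow> 0"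
proof -
  have "\<forall>n. \<exists>y\<in>X. y \<in> mball_of m (s n) (inverse (real (Suc n)))"
  proof
    fix n
    show "\<exists>y\<in>X. y \<in> mball_of m (s n) (inverse (real (Suc n)))"
      using assms by (intro dense_meets_mball_of) auto
  qed
  then obtain x where x: "\<And>n. x n \<in> X \<and> x n \<in> mball_of m (s n) (inverse (real (Suc n)))"
    by metis
  have "(\<lambda>n. mdist m (s n) (x n)) \<longlonglongrightarrow> 0"
    using x by (intro Lim_null_comparison[OF _ LIMSEQ_inverse_real_of_nat]) (simp add: less_imp_le)
  moreover have "range x \<subseteq> mspace (submetric m X)"
    using x by auto
  ultimately show ?thesis
    using that by blast
qed

lemma has_cluster_point_if_close:
  assumes "has_cluster_point m x" "range s \<subseteq> mspace m" "(\<lambda>n. mdist m (s n) (x n)) \<longlonglongrightarrow> 0"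
  shows "has_cluster_point m s"
  unfolding has_cluster_point_def
proof -
  obtain z where z: "z \<in> mspace m" "\<forall>e>0. infinite {n. x n \<in> mball_of m z e}"
    using assms(1) unfolding has_cluster_point_def by blast
  have "infinite {n. s n \<in> mball_of m z e}" if "e > 0" for e
  proof -
    have "{n. x n \<in> mball_of m z (e/2)} - {n. e/2 \<le> mdist m (s n) (x n)} \<subseteq> {n. s n \<in> mball_of m z e}"
    proof
      fix n
      assume n: "n \<in> {n. x n \<in> mball_of m z (e/2)} - {n. e/2 \<le> mdist m (s n) (x n)}"
      have "mdist m z (s n) \<le> mdist m z (x n) + mdist m (x n) (s n)"
        using n z(1) assms(2) by (intro mdist_triangle) auto
      also have "\<dots> < e"
        using n by (simp add: mdist_commute)
      finally show "n \<in> {n. s n \<in> mball_of m z e}"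
        using z(1) assms(2) by auto
    qed
    moreover have "infinite ({n. x n \<in> mball_of m z (e/2)} - {n. e/2 \<le> mdist m (s n) (x n)})"
    proof (rule Diff_infinite_finite)
      show "finite {n. e/2 \<le> mdist m (s n) (x n)}"
        using that by (intro finite_ge_if_LIMSEQ_zero[OF assms(3)]) simp
      show "infinite {n. x n \<in> mball_of m z (e/2)}"
        using z(2) that half_gt_zero by blast
    qed
    ultimately show ?thesis
      using finite_subset by blast
  qed
  with z(1) show "\<exists>z\<in>mspace m. \<forall>e>0. infinite {n. s n \<in> mball_of m z e}"
    by blast
qed

lemma eps_chain_in_dense_submetric:
  assumes dense: "mtopology_of m closure_of X = mspace m"
    and "e > 0" "eps_chain m e a b"
    and a': "a' \<in> mspace (submetric m X)" "mdist m a a' < \<delta>"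
    and b': "b' \<in> mspace (submetric m X)" "mdist m b b' < \<delta>"
  shows "eps_chain (submetric m X) (e + 2 * \<delta>) a' b'"
proof -
  have a: "a \<in> mspace m" and ab: "(a, b) \<in> (eps_step m e)\<^sup>*"
    using assms(3) by (auto simp: eps_chain_iff_rtrancl)
  from ab show ?thesis
    using b'
  proof (induction arbitrary: b' rule: rtrancl_induct)
    case base
    have "mdist m a' b' \<le> mdist m a' a + mdist m a b'"
      using base a' a by (intro mdist_triangle) auto
    also have "\<dots> < e + 2 * \<delta>"
      using a'(2) base(2) \<open>e > 0\<close> mdist_commute[of m a' a] by linarith
    finally have "mdist (submetric m X) a' b' < e + 2 * \<delta>"
      by simp
    moreover have "eps_chain (submetric m X) (e + 2 * \<delta>) a' a'"
      using a'(1) by (simp add: eps_chain_iff_rtrancl)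
    ultimately show ?case
      using base(1) by (simp add: eps_chain_snoc)
  next
    case (step b c)
    then have "b \<in> mspace m" "c \<in> mspace m" "mdist m b c < e"
      by (auto simp: eps_step_def)
    moreover have "\<delta> > 0"
      using a'(2) mdist_nonneg[of m a a'] by linarith
    ultimately obtain b'' where "b'' \<in> X" "b'' \<in> mball_of m b \<delta>"
      using dense_meets_mball_of[OF dense] by blast
    then have b'': "b'' \<in> mspace (submetric m X)" "mdist m b b'' < \<delta>"
      by auto
    have "mdist m b'' b' \<le> mdist m b'' b + mdist m b c + mdist m c b'"
      using mdist_triangle[of b'' m b b'] mdist_triangle[of b m c b'] b''(1) step.prems(1)
        \<open>b \<in> mspace m\<close> \<open>c \<in> mspace m\<close> by auto
    also have "\<dots> < e + 2 * \<delta>"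
      using b''(2) step.prems(2) \<open>mdist m b c < e\<close> mdist_commute[of m b'' b] by linarith
    finally have "mdist (submetric m X) b'' b' < e + 2 * \<delta>"
      by simp
    with step.IH[OF b''] step.prems(1) show ?case
      by (simp add: eps_chain_snoc)
  qed
qed

lemma cbqc_seq_submetric_if_close:
  assumes dense: "mtopology_of m closure_of X = mspace m"
    and s: "cbqc_seq m s" and x: "range x \<subseteq> mspace (submetric m X)"
    and close: "(\<lambda>n. mdist m (s n) (x n)) \<longlonglongrightarrow> 0"
  shows "cbqc_seq (submetric m X) x"
  unfolding cbqc_seq_def
proof (intro conjI allI impI)
  show "range x \<subseteq> mspace (submetric m X)" by fact
  fix e :: real
  assume "e > 0"
  then obtain N where N: "infinite N" "\<forall>j\<in>N. \<forall>k\<in>N. eps_chain m (e/3) (s j) (s k)"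
    using s unfolding cbqc_seq_def by (meson divide_pos_pos zero_less_numeral)
  define F where "F = {n. e/3 \<le> mdist m (s n) (x n)}"
  have "finite F"
    unfolding F_def using \<open>e > 0\<close> by (intro finite_ge_if_LIMSEQ_zero[OF close]) simp
  have "eps_chain (submetric m X) e (x j) (x k)" if "j \<in> N - F" "k \<in> N - F" for j k
  proof -
    have "eps_chain (submetric m X) (e/3 + 2 * (e/3)) (x j) (x k)"
      using that x N(2) \<open>e > 0\<close> unfolding F_def
      by (intro eps_chain_in_dense_submetric[OF dense, of "e/3" "s j" "s k"]) auto
    then show ?thesis
      by simp
  qed
  moreover have "infinite (N - F)"
    using N(1) \<open>finite F\<close> by (rule Diff_infinite_finite[rotated])
  ultimately show "\<exists>N. infinite N \<and> (\<forall>j\<in>N. \<forall>k\<in>N. eps_chain (submetric m X) e (x j) (x k))"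
    by blast
qed

definition first_index :: "(nat \<Rightarrow> 'a) \<Rightarrow> 'a \<Rightarrow> real" where
  "first_index x y = (if y \<in> range x then real (LEAST n. x n = y) else 0)"

lemma first_index_cbc_regular:
  assumes "cb_complete m" "\<not> has_cluster_point m x"
  shows "cbc_regular (submetric m X) euclidean_metric (first_index x)"
  unfolding cbc_regular_def
proof (intro allI impI)
  fix t
  assume "cbc_seq (submetric m X) t"
  then have "has_cluster_point m t"
    using assms(1) cbc_seq_submetric unfolding cb_complete_def by blast
  then obtain z where z: "z \<in> mspace m" "\<forall>r>0. infinite {n. t n \<in> mball_of m z r}"
    unfolding has_cluster_point_def by blast
  then obtain r where r: "r > 0" "finite {n. x n \<in> mball_of m z r}"
    using assms(2) unfolding has_cluster_point_def by blast
  then obtain B where B: "\<And>i. x i \<in> mball_of m z r \<Longrightarrow> i \<le> B"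
    using finite_nat_set_iff_bounded_le by auto
  define T where "T = {n. t n \<in> mball_of m z r}"
  have "first_index x (t n) \<in> {0..real B}" if "n \<in> T" for n
  proof (cases "t n \<in> range x")
    case True
    then have "x (LEAST i. x i = t n) = t n"
      by (auto intro: LeastI)
    then show ?thesis
      using True B that by (simp add: first_index_def T_def)
  qed (simp add: first_index_def)
  then have "(first_index x \<circ> t) ` T \<subseteq> {0..real B}"
    by auto
  then have "bounded ((first_index x \<circ> t) ` T)"
    by (rule bounded_subset[OF bounded_closed_interval])
  moreover have "infinite T"
    unfolding T_def using z(2) r(1) by blast
  ultimately show "cbc_seq euclidean_metric (first_index x \<circ> t)"
    unfolding cbc_seq_euclidean_iff by blast
qed

lemma first_index_not_cbc:
  assumes "\<not> has_cluster_point m x" "range x \<subseteq> mspace m"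
  shows "\<not> cbc_seq euclidean_metric (first_index x \<circ> x)"
proof
  assume "cbc_seq euclidean_metric (first_index x \<circ> x)"
  then obtain N K where N: "infinite N" "\<And>n. n \<in> N \<Longrightarrow> first_index x (x n) \<le> K"
    unfolding cbc_seq_euclidean_iff bounded_real by (metis abs_le_D1 comp_apply image_eqI)
  obtain K' :: nat where "K < real K'"
    using reals_Archimedean2 by blast
  have "N \<subseteq> (\<Union>i<K'. {n. x n = x i})"
  proof
    fix n
    assume "n \<in> N"
    define i where "i = (LEAST i. x i = x n)"
    have "x i = x n"
      unfolding i_def by (rule LeastI) (rule refl)
    moreover have "real i \<le> K"
      using N(2)[OF \<open>n \<in> N\<close>] by (simp add: first_index_def i_def)
    moreover have "i < K'"
      using \<open>real i \<le> K\<close> \<open>K < real K'\<close> by linarith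
    ultimately show "n \<in> (\<Union>i<K'. {n. x n = x i})"
      by (auto intro!: bexI[of _ i])
  qed
  moreover have "finite {n. x n = x i}" for i
  proof -
    have "x i \<in> mspace m"
      using assms(2) by auto
    then obtain r where "r > 0" "finite {n. x n \<in> mball_of m (x i) r}"
      using assms(1) unfolding has_cluster_point_def by blast
    moreover have "{n. x n = x i} \<subseteq> {n. x n \<in> mball_of m (x i) r}"
      using \<open>x i \<in> mspace m\<close> \<open>r > 0\<close> by auto
    ultimately show ?thesis
      using finite_subset by blast
  qed
  ultimately show False
    using N(1) finite_subset by blast
qed

lemma cb_quasi_complete_if_real_cbc_regular_preserves_cbqc:
  assumes dense: "mtopology_of m closure_of X = mspace m"
    and "cb_complete m"
    and preserves: "\<And>f :: 'a \<Rightarrow> real. \<And>s. cbc_regular (submetric m X) euclidean_metric f \<Longrightarrow>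
        cbqc_seq (submetric m X) s \<Longrightarrow> cbc_seq euclidean_metric (f \<circ> s)"
  shows "cb_quasi_complete m"
  unfolding cb_quasi_complete_def
proof (intro allI impI)
  fix s
  assume s: "cbqc_seq m s"
  show "has_cluster_point m s"
  proof (rule ccontr)
    assume no_cluster: "\<not> has_cluster_point m s"
    have "range s \<subseteq> mspace m"
      using s by (simp add: cbqc_seq_def)
    then obtain x where x: "range x \<subseteq> mspace (submetric m X)"
      and close: "(\<lambda>n. mdist m (s n) (x n)) \<longlonglongrightarrow> 0"
      using dense_approximating_seq[OF dense] by blast
    have "cbqc_seq (submetric m X) x"
      using cbqc_seq_submetric_if_close[OF dense s x close] .
    moreover have "\<not> has_cluster_point m x"
      using no_cluster has_cluster_point_if_close[OF _ \<open>range s \<subseteq> mspace m\<close> close] by blast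
    ultimately have "cbc_seq euclidean_metric (first_index x \<circ> x)"
      using preserves first_index_cbc_regular[OF \<open>cb_complete m\<close>] by blast
    moreover have "range x \<subseteq> mspace m"
      using x by auto
    ultimately show False
      using first_index_not_cbc \<open>\<not> has_cluster_point m x\<close> by blast
  qed
qed

theorem mainTheorem11:
  fixes Xh :: "'a metric" and X :: "'a set"
  assumes complete: "mcomplete_of Xh"
    and sub: "X \<subseteq> mspace Xh"
    and dense: "mtopology_of Xh closure_of X = mspace Xh"
  defines "mX \<equiv> submetric Xh X"
  defines "P1 \<equiv> cb_quasi_complete Xh"
  defines "P3 \<equiv> cb_complete Xh \<and>
             (\<forall>f. f \<in> X \<rightarrow> UNIV \<longrightarrow> cbc_regular mX (euclidean_metric :: real metric) f \<longrightarrow>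
                 (\<forall>s. cbqc_seq mX s \<longrightarrow> cbc_seq (euclidean_metric :: real metric) (f \<circ> s)))"
  defines "P4 \<equiv> cb_complete Xh \<and> (\<forall>s. cbqc_seq mX s \<longrightarrow> cbc_seq mX s)"
  shows "(P1 \<longrightarrow> cb_complete Xh \<and> cond2 mX TYPE('b))
         \<and> (cb_complete Xh \<and> cond2 mX TYPE(real) \<longrightarrow> P1)
         \<and> (P1 \<longleftrightarrow> P3) \<and> (P1 \<longleftrightarrow> P4)"
proof -
  have P1_imp_P4: "P1 \<Longrightarrow> P4"
    unfolding P1_def P4_def mX_def
    using cb_complete_if_cb_quasi_complete cbc_seq_if_cbqc_seq_submetric by blast
  have P4_imp_P3: "P4 \<Longrightarrow> P3"
    unfolding P4_def P3_def cbc_regular_def by blast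
  have P3_imp_P1: "P3 \<Longrightarrow> P1"
    unfolding P3_def P1_def mX_def
    using cb_quasi_complete_if_real_cbc_regular_preserves_cbqc[OF dense] by blast
  have cond2_real_imp_P3: "cb_complete Xh \<and> cond2 mX TYPE(real) \<Longrightarrow> P3"
    unfolding P3_def cond2_def by simp
  show ?thesis
    using P1_imp_P4 P4_imp_P3 P3_imp_P1 cond2_real_imp_P3 cond2_if_cbqc_imp_cbc
    unfolding P4_def by blast
qed

end
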